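(* Let $\mathbf{A}\in\mathbb{R}^{p\times q}$ have full row rank, let $\mathbf{W}\in\mathbb{R}^{q\times q}$ be symmetric positive semidefinite (the neural tangent kernel of the network), let $\eta>0$, and let $\mathbf{x}\in\mathbb{R}^q$ be the ground truth image. Suppose the measurements are $\mathbf{y}=\mathbf{A}\mathbf{x}+\mathbf{n}$ with $\mathbf{n}\in\mathbb{R}^p$, $\mathbf{n}\sim\mathcal{N}(\mathbf{0},\sigma^2\mathbf{I})$. Define the iterates $$\mathbf{z}_{t+1}=\mathbf{z}_t+\eta\,\mathbf{W}\left(\mathbf{A}^T\mathbf{y}-\mathbf{A}^T\mathbf{A}\mathbf{z}_t\right),\qquad \mathbf{z}_0=\mathbf{0}.$$ Then the mean squared error $\mathrm{MSE}_t:=\mathbb{E}_{\mathbf{n}}\|\mathbf{z}_t-\mathbf{x}\|_2^2$ at iteration $t$ is $$\mathrm{MSE}_t=\left\|\left(\mathbf{I}-\eta\mathbf{W}\mathbf{A}^T\mathbf{A}\right)^t\mathbf{x}\right\|_2^2+\sigma^2\sum_{i=1}^p\nu_{t,i}^2,$$ where $\nu_{t,1},\dots,\nu_{t,p}$ are the singular values of the matrix $\left(\mathbf{I}-(\mathbf{I}-\eta\mathbf{W}\mathbf{A}^T\mathbf{A})^t\right)\mathbf{A}^{\dagger}$.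
   Context: $\mathbf{A}^\dagger$ denotes the Moore–Penrose pseudo-inverse of $\mathbf{A}$. The recursion models gradient-descent training of a deep image prior network with loss $\|\mathbf{A}f_\theta(\mathbf{z})-\mathbf{y}\|_2^2$ in the regime where the neural tangent kernel $\mathbf{W}$ stays fixed, with $\mathbf{z}_t$ the network output at iteration $t$. The MSE is decomposed as squared norm of the bias $\mathbb{E}_{\mathbf{n}}[\mathbf{z}_t]-\mathbf{x}$ plus the trace of the covariance of $\mathbf{z}_t$. *)

theory Defs
  imports "HOL-Analysis.Analysis" "HOL-Probability.Probability"
begin

text \<open>Matrices are represented as \<open>real^'cols^'rows\<close> (HOL-Analysis).\<close>

text \<open>Matrix power (the vec type's own power is componentwise, hence this definition).\<close>
primrec mpow :: "real^'n^'n \<Rightarrow> nat \<Rightarrow> real^'n^'n" where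
  "mpow M 0 = mat 1"
| "mpow M (Suc t) = M ** mpow M t"

definition pinv :: "real^'q^'p \<Rightarrow> real^'p^'q" where
  "pinv A = (THE X. A ** X ** A = A \<and> X ** A ** X = X \<and>
                    transpose (A ** X) = A ** X \<and> transpose (X ** A) = X ** A)"

definition sym_psd :: "real^'n^'n \<Rightarrow> bool" where
  "sym_psd W \<longleftrightarrow> transpose W = W \<and> (\<forall>v. 0 \<le> v \<bullet> (W *v v))"

text \<open>Singular values of a \<open>q \<times> p\<close> matrix \<open>M\<close> (with \<open>p \<le> q\<close>), via a thin SVD
  \<open>M = U diag(\<nu>) V^T\<close>, \<open>U\<close> with orthonormal columns, \<open>V\<close> orthogonal, \<open>\<nu> \<ge> 0\<close>.\<close>
definition singular_values :: "real^'p^'q \<Rightarrow> ('p \<Rightarrow> real) \<Rightarrow> bool" where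
  "singular_values M \<nu> \<longleftrightarrow> (\<forall>i. 0 \<le> \<nu> i) \<and>
     (\<exists>(U::real^'p^'q) (V::real^'p^'p).
        transpose U ** U = mat 1 \<and> transpose V ** V = mat 1 \<and>
        M = U ** (\<chi> i j. if i = j then \<nu> i else 0) ** transpose V)"

primrec dip_iter :: "real \<Rightarrow> real^'q^'q \<Rightarrow> real^'q^'p \<Rightarrow> real^'p \<Rightarrow> nat \<Rightarrow> real^'q" where
  "dip_iter \<eta> W A y 0 = 0"
| "dip_iter \<eta> W A y (Suc t) =
     dip_iter \<eta> W A y t + \<eta> *\<^sub>R (W *v (transpose A *v y - transpose A *v (A *v dip_iter \<eta> W A y t)))"

definition gaussian_vec :: "real \<Rightarrow> (real^'p) measure" where
  "gaussian_vec \<sigma> = distr (PiM UNIV (\<lambda>_. density lborel (normal_density 0 \<sigma>))) borel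
                         (\<lambda>f. \<chi> i. f i)"

end

theory Submission
  imports Defs
begin

text \<open>With \<open>B = I - \<eta> W A\<^sup>T A\<close>, the iteration on exact data \<open>A x\<close> satisfies
  \<open>x - z\<^sub>t\<^sub>+\<^sub>1 = B (x - z\<^sub>t)\<close>, so its error is \<open>B\<^sup>t x\<close>. The iteration is linear in the data, and
  since \<open>A A\<^sup>\<dagger> = I\<close> for \<open>A\<close> of full row rank, the noise \<open>n = A (A\<^sup>\<dagger> n)\<close> contributes
  \<open>M n\<close> with \<open>M = (I - B\<^sup>t) A\<^sup>\<dagger>\<close>. Thus \<open>z\<^sub>t - x = M n - B\<^sup>t x\<close>. For \<open>n \<sim> N(0, \<sigma>\<^sup>2 I)\<close> the
  cross term has mean zero and \<open>E \<parallel>M n\<parallel>\<^sup>2 = \<sigma>\<^sup>2 \<parallel>M\<parallel>\<^sub>F\<^sup>2\<close>, the squared Frobenius norm being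
  the sum of the squared singular values.\<close>

section \<open>Moore--Penrose inverse of a matrix of full row rank\<close>

definition penrose_equations :: "real^'q^'p \<Rightarrow> real^'p^'q \<Rightarrow> bool" where
  "penrose_equations A X \<longleftrightarrow> A ** X ** A = A \<and> X ** A ** X = X \<and>
     transpose (A ** X) = A ** X \<and> transpose (X ** A) = X ** A"

lemma penrose_equations_unique:
  assumes X: "penrose_equations A X" and Y: "penrose_equations A Y"
  shows "X = Y"
proof -
  have AXA: "A ** X ** A = A" and XAX: "X ** A ** X = X"
    and AX: "transpose (A ** X) = A ** X" and XA: "transpose (X ** A) = X ** A"
    using X by (auto simp: penrose_equations_def)
  have AYA: "A ** Y ** A = A" and YAY: "Y ** A ** Y = Y"
    and AY: "transpose (A ** Y) = A ** Y" and YA: "transpose (Y ** A) = Y ** A"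
    using Y by (auto simp: penrose_equations_def)
  have "X = X ** transpose (A ** X)"
    using XAX AX by (simp add: matrix_mul_assoc)
  also have "\<dots> = X ** transpose X ** transpose (A ** Y ** A)"
    using AYA by (simp add: matrix_transpose_mul matrix_mul_assoc)
  also have "\<dots> = X ** transpose (A ** X) ** transpose (A ** Y)"
    by (simp add: matrix_transpose_mul matrix_mul_assoc)
  also have "\<dots> = (X ** A ** X) ** A ** Y"
    using AX AY by (simp add: matrix_mul_assoc)
  finally have X_eq: "X = X ** A ** Y"
    using XAX by simp
  have "Y = transpose (Y ** A) ** Y"
    using YAY YA by (simp add: matrix_mul_assoc)
  also have "\<dots> = transpose (A ** X ** A) ** transpose Y ** Y"
    using AXA by (simp add: matrix_transpose_mul matrix_mul_assoc)
  also have "\<dots> = transpose (X ** A) ** transpose (Y ** A) ** Y"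
    by (simp add: matrix_transpose_mul matrix_mul_assoc)
  also have "\<dots> = X ** A ** (Y ** A ** Y)"
    using XA YA by (simp add: matrix_mul_assoc)
  finally show ?thesis
    using X_eq YAY by simp
qed

lemma pinv_eqI: "penrose_equations A X \<Longrightarrow> pinv A = X"
  unfolding pinv_def penrose_equations_def[symmetric] by (blast intro: penrose_equations_unique)

lemma gram_left_invertible:
  fixes A :: "real^'q^'p" and R :: "real^'p^'q"
  assumes AR: "A ** R = mat 1"
  shows "\<exists>G. G ** (A ** transpose A) = mat 1"
proof -
  have "v = 0" if "(A ** transpose A) *v v = 0" for v
  proof -
    have "(transpose A *v v) \<bullet> (transpose A *v v) = v \<bullet> ((A ** transpose A) *v v)"
      by (metis dot_lmul_matrix matrix_vector_mul_assoc transpose_matrix_vector)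
    then have "transpose A *v v = 0"
      using that by simp
    then have "transpose (A ** R) *v v = 0"
      by (metis matrix_transpose_mul matrix_vector_mul_assoc matrix_vector_mult_0_right)
    then show "v = 0"
      by (simp add: AR)
  qed
  then show ?thesis
    using matrix_left_invertible_ker by blast
qed

lemma penrose_equations_full_row_rank:
  fixes A :: "real^'q^'p"
  assumes "rank A = CARD('p)"
  shows "\<exists>X. penrose_equations A X \<and> A ** X = mat 1"
proof -
  obtain R where "A ** R = mat 1"
    using assms full_rank_surjective matrix_right_invertible_surjective by blast
  then obtain G where "G ** (A ** transpose A) = mat 1"
    using gram_left_invertible by blast
  then have AAG: "A ** transpose A ** G = mat 1"
    using matrix_left_right_inverse by blast
  have "transpose G ** (A ** transpose A) = mat 1"
    using AAG by (metis matrix_transpose_mul transpose_mat transpose_transpose)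
  then have G_sym: "transpose G = G"
    using AAG by (metis matrix_mul_assoc matrix_mul_lid matrix_mul_rid)
  define X where "X = transpose A ** G"
  have AX: "A ** X = mat 1"
    using AAG by (simp add: X_def matrix_mul_assoc)
  have "transpose (X ** A) = X ** A"
    by (simp add: X_def matrix_transpose_mul G_sym matrix_mul_assoc)
  with AX have "penrose_equations A X"
    by (simp add: penrose_equations_def matrix_mul_assoc[symmetric])
  with AX show ?thesis by blast
qed

lemma pinv_right_inverse:
  fixes A :: "real^'q^'p"
  assumes "rank A = CARD('p)"
  shows "A ** pinv A = mat 1"
  using penrose_equations_full_row_rank[OF assms] pinv_eqI by metis

section \<open>Frobenius norm and singular values\<close>

text \<open>The norm of HOL-Analysis on \<open>real^'p^'q\<close> is the Euclidean norm of the matrix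
  entries, i.e.\ the Frobenius norm.\<close>

lemma norm_matrix_power2_eq_trace:
  fixes M :: "real^'p^'q"
  shows "(norm M)\<^sup>2 = trace (transpose M ** M)"
  by (simp add: power2_norm_eq_inner inner_vec_def trace_def matrix_matrix_mult_def
      transpose_def sum.swap[of _ "UNIV::'q set"])

lemma norm_power2_eq_sum_singular_values:
  fixes M :: "real^'p^'q"
  assumes "singular_values M \<nu>"
  shows "(norm M)\<^sup>2 = (\<Sum>i\<in>UNIV. (\<nu> i)\<^sup>2)"
proof -
  define D :: "real^'p^'p" where "D = (\<chi> i j. if i = j then \<nu> i else 0)"
  obtain U :: "real^'p^'q" and V :: "real^'p^'p" where UU: "transpose U ** U = mat 1"
    and VV: "transpose V ** V = mat 1" and M: "M = U ** D ** transpose V"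
    using assms unfolding singular_values_def D_def by blast
  have D_sym: "transpose D = D"
    by (simp add: D_def transpose_def vec_eq_iff)
  have "(norm M)\<^sup>2 = trace (transpose M ** M)"
    by (rule norm_matrix_power2_eq_trace)
  also have "transpose M ** M = V ** ((D ** D) ** transpose V)"
  proof -
    have "transpose M ** M = V ** transpose D ** (transpose U ** U) ** D ** transpose V"
      by (simp add: M matrix_transpose_mul matrix_mul_assoc)
    then show ?thesis
      by (simp add: UU D_sym matrix_mul_assoc)
  qed
  also have "trace \<dots> = trace (((D ** D) ** transpose V) ** V)"
    by (rule trace_mul_sym)
  also have "\<dots> = trace (D ** D)"
    by (simp add: matrix_mul_assoc[symmetric] VV)
  also have "\<dots> = (\<Sum>i\<in>UNIV. (\<nu> i)\<^sup>2)"
    by (simp add: trace_def matrix_matrix_mult_def D_def power2_eq_square if_distrib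
        cong: if_cong)
  finally show ?thesis .
qed

section \<open>Moments of the isotropic Gaussian\<close>

text \<open>\<open>E X\<^sup>k\<close> for \<open>X \<sim> N(0, \<sigma>\<^sup>2)\<close>, i.e.\ \<open>(k - 1)!! \<sigma>\<^sup>k\<close> for even \<open>k\<close>, written in the form of the
  library lemma \<open>normal_moment_even\<close>.\<close>

definition normal_moment :: "real \<Rightarrow> nat \<Rightarrow> real" where
  "normal_moment \<sigma> k = (if odd k then 0 else fact k / ((2 / \<sigma>\<^sup>2) ^ (k div 2) * fact (k div 2)))"

lemma normal_moment_0 [simp]: "normal_moment \<sigma> 0 = 1"
  and normal_moment_2 [simp]: "normal_moment \<sigma> 2 = \<sigma>\<^sup>2"
  and normal_moment_eq_0_if_odd [simp]: "odd k \<Longrightarrow> normal_moment \<sigma> k = 0"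
  by (auto simp: normal_moment_def)

lemma has_bochner_integral_normal_power:
  assumes "\<sigma> > 0"
  shows "has_bochner_integral (density lborel (normal_density 0 \<sigma>)) (\<lambda>x. x ^ k) (normal_moment \<sigma> k)"
proof (rule has_bochner_integral_density)
  show "has_bochner_integral lborel (\<lambda>x. normal_density 0 \<sigma> x *\<^sub>R x ^ k) (normal_moment \<sigma> k)"
  proof (cases "even k")
    case True
    then obtain m where "k = 2 * m" by (auto elim: evenE)
    then show ?thesis
      using normal_moment_even[where \<mu> = 0 and k = m, OF assms] by (simp add: normal_moment_def)
  next
    case False
    then obtain m where "k = 2 * m + 1" by (auto elim: oddE)
    then show ?thesis
      using normal_moment_odd[where \<mu> = 0 and k = m, OF assms] by (simp add: normal_moment_def)
  qed
qed auto

lemma has_bochner_integral_PiM_normal_monomial: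
  fixes e :: "'p::finite \<Rightarrow> nat"
  assumes "\<sigma> > 0"
  shows "has_bochner_integral (PiM UNIV (\<lambda>_. density lborel (normal_density 0 \<sigma>)))
    (\<lambda>\<omega>. \<Prod>l\<in>UNIV. \<omega> l ^ e l) (\<Prod>l\<in>UNIV. normal_moment \<sigma> (e l))"
proof -
  interpret N: prob_space "density lborel (normal_density 0 \<sigma>)"
    using prob_space_normal_density[OF assms] .
  interpret PS: product_prob_space "\<lambda>_::'p. density lborel (normal_density 0 \<sigma>)" UNIV
    by unfold_locales
  have integrable: "integrable (density lborel (normal_density 0 \<sigma>)) (\<lambda>x. x ^ k)"
    and integral: "(\<integral>x. x ^ k \<partial>density lborel (normal_density 0 \<sigma>)) = normal_moment \<sigma> k" for k
    using has_bochner_integral_normal_power[OF assms] by (auto simp: has_bochner_integral_iff)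
  have "integrable (PiM UNIV (\<lambda>_. density lborel (normal_density 0 \<sigma>))) (\<lambda>\<omega>. \<Prod>l\<in>UNIV. \<omega> l ^ e l)"
    by (rule PS.product_integrable_prod) (simp_all add: integrable)
  moreover have "(\<integral>\<omega>. (\<Prod>l\<in>UNIV. \<omega> l ^ e l) \<partial>PiM UNIV (\<lambda>_. density lborel (normal_density 0 \<sigma>)))
      = (\<Prod>l\<in>UNIV. normal_moment \<sigma> (e l))"
    by (subst PS.product_integral_prod) (simp_all add: integrable integral)
  ultimately show ?thesis
    by (simp add: has_bochner_integral_iff)
qed

lemma measurable_vec_lambda_PiM_density:
  fixes f :: "real \<Rightarrow> ennreal"
  shows "(\<lambda>\<omega>. (\<chi> i. \<omega> i) :: real^'p) \<in> borel_measurable (PiM (UNIV::'p::finite set) (\<lambda>_. density lborel f))"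
proof (rule borel_measurable_euclidean_space[THEN iffD2], intro ballI)
  fix b :: "real^'p" assume "b \<in> Basis"
  then obtain i where b: "b = axis i 1" by (auto simp: Basis_vec_def)
  have "(\<lambda>\<omega>. (\<chi> i. \<omega> i) \<bullet> b) = (\<lambda>\<omega>. \<omega> i)"
    by (simp add: b inner_axis)
  then show "(\<lambda>\<omega>. (\<chi> i. \<omega> i) \<bullet> b) \<in> borel_measurable (PiM UNIV (\<lambda>_. density lborel f))"
    by simp
qed

lemma prob_space_gaussian_vec: "\<sigma> > 0 \<Longrightarrow> prob_space (gaussian_vec \<sigma>)"
  unfolding gaussian_vec_def
  by (intro prob_space.prob_space_distr prob_space_PiM prob_space_normal_density
      measurable_vec_lambda_PiM_density)

lemma has_bochner_integral_gaussian_vec_monomial: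
  fixes e :: "'p::finite \<Rightarrow> nat"
  assumes "\<sigma> > 0"
  shows "has_bochner_integral (gaussian_vec \<sigma>) (\<lambda>n. \<Prod>l\<in>UNIV. n $ l ^ e l)
    (\<Prod>l\<in>UNIV. normal_moment \<sigma> (e l))"
  unfolding gaussian_vec_def
  by (rule has_bochner_integral_distr[OF _ measurable_vec_lambda_PiM_density])
    (use has_bochner_integral_PiM_normal_monomial[OF assms] in simp_all)

lemma has_bochner_integral_gaussian_vec_mean:
  fixes i :: "'p::finite"
  assumes "\<sigma> > 0"
  shows "has_bochner_integral (gaussian_vec \<sigma>) (\<lambda>n. n $ i) 0"
proof -
  define e where "e l = (if l = i then 1 else 0 :: nat)" for l :: 'p
  have monomial: "(\<lambda>n. \<Prod>l\<in>UNIV. n $ l ^ e l) = (\<lambda>n::real^'p. n $ i)"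
  proof (rule ext)
    fix n :: "real^'p"
    have "(\<Prod>l\<in>UNIV. n $ l ^ e l) = (\<Prod>l\<in>UNIV. if l = i then n $ l else 1)"
      by (rule prod.cong) (simp_all add: e_def)
    then show "(\<Prod>l\<in>UNIV. n $ l ^ e l) = n $ i"
      by (simp add: prod.delta)
  qed
  have "normal_moment \<sigma> (e i) = 0"
    by (simp add: e_def)
  then have moment: "(\<Prod>l\<in>UNIV. normal_moment \<sigma> (e l)) = 0"
    by (auto simp: prod_zero_iff)
  show ?thesis
    using has_bochner_integral_gaussian_vec_monomial[OF assms, of e] by (simp only: monomial moment)
qed

lemma has_bochner_integral_gaussian_vec_covariance:
  fixes i k :: "'p::finite"
  assumes "\<sigma> > 0"
  shows "has_bochner_integral (gaussian_vec \<sigma>) (\<lambda>n. n $ i * n $ k) (if i = k then \<sigma>\<^sup>2 else 0)"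
proof -
  define e where "e l = (if l = i then 1 else 0) + (if l = k then 1 else 0 :: nat)" for l :: 'p
  have monomial: "(\<lambda>n. \<Prod>l\<in>UNIV. n $ l ^ e l) = (\<lambda>n::real^'p. n $ i * n $ k)"
  proof (rule ext)
    fix n :: "real^'p"
    have "(\<Prod>l\<in>UNIV. n $ l ^ e l) =
        (\<Prod>l\<in>UNIV. (if l = i then n $ l else 1) * (if l = k then n $ l else 1))"
      by (rule prod.cong) (simp_all add: e_def power_add)
    then show "(\<Prod>l\<in>UNIV. n $ l ^ e l) = n $ i * n $ k"
      by (simp add: prod.distrib prod.delta)
  qed
  have moment: "(\<Prod>l\<in>UNIV. normal_moment \<sigma> (e l)) = (if i = k then \<sigma>\<^sup>2 else 0)"
  proof (cases "i = k")
    case True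
    then have "e l = (if l = i then 2 else 0)" for l
      by (simp add: e_def)
    then have "normal_moment \<sigma> (e l) = (if l = i then \<sigma>\<^sup>2 else 1)" for l
      by simp
    with True show ?thesis
      by (simp add: prod.delta)
  next
    case False
    then have "normal_moment \<sigma> (e i) = 0"
      by (simp add: e_def)
    with False show ?thesis
      by (auto simp: prod_zero_iff)
  qed
  show ?thesis
    using has_bochner_integral_gaussian_vec_monomial[OF assms, of e] by (simp only: monomial moment)
qed

lemma integral_gaussian_vec_sq_dist:
  fixes M :: "real^'p^'q" and c :: "real^'q"
  assumes "\<sigma> > 0"
  shows "(\<integral>n. (norm (M *v n - c))\<^sup>2 \<partial>gaussian_vec \<sigma>) = (norm c)\<^sup>2 + \<sigma>\<^sup>2 * (norm M)\<^sup>2"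
proof -
  let ?G = "gaussian_vec \<sigma> :: (real^'p) measure"
  interpret prob_space ?G
    using prob_space_gaussian_vec[OF assms] .
  have cross: "has_bochner_integral ?G (\<lambda>n. c \<bullet> (M *v n)) 0"
  proof -
    have "(\<lambda>n. c \<bullet> (M *v n)) = (\<lambda>n. \<Sum>j\<in>UNIV. \<Sum>i\<in>UNIV. (c $ j * M $ j $ i) * n $ i)"
      by (simp add: inner_vec_def matrix_vector_mult_def sum_distrib_left mult.assoc)
    moreover have "has_bochner_integral ?G (\<lambda>n. \<Sum>j\<in>UNIV. \<Sum>i\<in>UNIV. (c $ j * M $ j $ i) * n $ i)
        (\<Sum>j\<in>UNIV. \<Sum>i\<in>UNIV. (c $ j * M $ j $ i) * 0)"
      by (intro has_bochner_integral_sum has_bochner_integral_mult_right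
          has_bochner_integral_gaussian_vec_mean assms)
    ultimately show ?thesis by simp
  qed
  have quad: "has_bochner_integral ?G (\<lambda>n. (norm (M *v n))\<^sup>2) (\<sigma>\<^sup>2 * (norm M)\<^sup>2)"
  proof -
    have "(\<lambda>n. (norm (M *v n))\<^sup>2) =
        (\<lambda>n. \<Sum>j\<in>UNIV. \<Sum>i\<in>UNIV. \<Sum>k\<in>UNIV. (M $ j $ i * M $ j $ k) * (n $ i * n $ k))"
      by (simp add: power2_norm_eq_inner inner_vec_def matrix_vector_mult_def sum_product mult_ac)
    moreover have "has_bochner_integral ?G
        (\<lambda>n. \<Sum>j\<in>UNIV. \<Sum>i\<in>UNIV. \<Sum>k\<in>UNIV. (M $ j $ i * M $ j $ k) * (n $ i * n $ k))
        (\<Sum>j\<in>UNIV. \<Sum>i\<in>UNIV. \<Sum>k\<in>UNIV. (M $ j $ i * M $ j $ k) * (if i = k then \<sigma>\<^sup>2 else 0))"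
      by (intro has_bochner_integral_sum has_bochner_integral_mult_right
          has_bochner_integral_gaussian_vec_covariance assms)
    moreover have "(\<Sum>j\<in>UNIV. \<Sum>i\<in>UNIV. \<Sum>k\<in>UNIV. (M $ j $ i * M $ j $ k) * (if i = k then \<sigma>\<^sup>2 else 0))
        = \<sigma>\<^sup>2 * (norm M)\<^sup>2"
      by (simp add: power2_norm_eq_inner inner_vec_def if_distrib sum.If_cases sum_distrib_left
          mult_ac)
    ultimately show ?thesis by simp
  qed
  have const: "has_bochner_integral ?G (\<lambda>_. a) a" for a :: real
    by (simp add: has_bochner_integral_iff prob_space)
  have "(norm (v - c))\<^sup>2 = (norm v)\<^sup>2 - 2 * (c \<bullet> v) + (norm c)\<^sup>2" for v :: "real^'q"
    by (simp add: power2_norm_eq_inner inner_diff_left inner_diff_right inner_commute[of v c])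
  then have "(\<lambda>n. (norm (M *v n - c))\<^sup>2) = (\<lambda>n. (norm (M *v n))\<^sup>2 - 2 * (c \<bullet> (M *v n)) + (norm c)\<^sup>2)"
    by simp
  moreover have "has_bochner_integral ?G (\<lambda>n. (norm (M *v n))\<^sup>2 - 2 * (c \<bullet> (M *v n)) + (norm c)\<^sup>2)
      (\<sigma>\<^sup>2 * (norm M)\<^sup>2 - 2 * 0 + (norm c)\<^sup>2)"
    by (intro has_bochner_integral_add has_bochner_integral_diff has_bochner_integral_mult_right
        quad cross const)
  ultimately show ?thesis
    by (simp add: has_bochner_integral_integral_eq)
qed

section \<open>The gradient descent iterates\<close>

lemma dip_iter_add:
  "dip_iter \<eta> W A (y + y') t = dip_iter \<eta> W A y t + dip_iter \<eta> W A y' t"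
  by (induction t) (simp_all add: algebra_simps)

lemma dip_iter_error_noiseless:
  "x - dip_iter \<eta> W A (A *v x) t = mpow (mat 1 - \<eta> *\<^sub>R (W ** transpose A ** A)) t *v x"
proof (induction t)
  case 0
  show ?case by simp
next
  case (Suc t)
  let ?B = "mat 1 - \<eta> *\<^sub>R (W ** transpose A ** A)" and ?z = "dip_iter \<eta> W A (A *v x) t"
  have "x - dip_iter \<eta> W A (A *v x) (Suc t) = ?B *v (x - ?z)"
    by (simp add: algebra_simps scaleR_matrix_vector_assoc[symmetric] matrix_vector_mul_assoc[symmetric])
  also have "\<dots> = mpow ?B (Suc t) *v x"
    by (simp add: Suc.IH matrix_vector_mul_assoc)
  finally show ?case .
qed

lemma dip_iter_closed_form:
  assumes "A ** P = mat 1"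
  shows "dip_iter \<eta> W A y t = ((mat 1 - mpow (mat 1 - \<eta> *\<^sub>R (W ** transpose A ** A)) t) ** P) *v y"
proof -
  have "A *v (P *v y) = y"
    by (simp add: matrix_vector_mul_assoc assms)
  then have "P *v y - dip_iter \<eta> W A y t = mpow (mat 1 - \<eta> *\<^sub>R (W ** transpose A ** A)) t *v (P *v y)"
    using dip_iter_error_noiseless[of "P *v y" \<eta> W A t] by simp
  then show ?thesis
    by (simp add: algebra_simps matrix_vector_mul_assoc[symmetric])
qed

theorem theorem2:
  fixes A :: "real^'q^'p" and W :: "real^'q^'q" and x :: "real^'q"
    and \<eta> \<sigma> :: real and t :: nat and \<nu> :: "'p \<Rightarrow> real"
  assumes "rank A = CARD('p)"
    and "sym_psd W"
    and "\<eta> > 0"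
    and "\<sigma> > 0"
    and "singular_values ((mat 1 - mpow (mat 1 - \<eta> *\<^sub>R (W ** transpose A ** A)) t) ** pinv A) \<nu>"
  shows "(\<integral>n. (norm (dip_iter \<eta> W A (A *v x + n) t - x))\<^sup>2 \<partial>gaussian_vec \<sigma>)
         = (norm (mpow (mat 1 - \<eta> *\<^sub>R (W ** transpose A ** A)) t *v x))\<^sup>2
           + \<sigma>\<^sup>2 * (\<Sum>i\<in>UNIV. (\<nu> i)\<^sup>2)"
proof -
  define Q where "Q = mpow (mat 1 - \<eta> *\<^sub>R (W ** transpose A ** A)) t"
  define M where "M = (mat 1 - Q) ** pinv A"
  have error: "dip_iter \<eta> W A (A *v x + n) t - x = M *v n - Q *v x" for n
    using dip_iter_add[of \<eta> W A "A *v x" n t] dip_iter_error_noiseless[of x \<eta> W A t]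
      dip_iter_closed_form[OF pinv_right_inverse[OF assms(1)], of \<eta> W n t]
    by (simp add: M_def Q_def algebra_simps)
  have "(\<integral>n. (norm (dip_iter \<eta> W A (A *v x + n) t - x))\<^sup>2 \<partial>gaussian_vec \<sigma>)
      = (norm (Q *v x))\<^sup>2 + \<sigma>\<^sup>2 * (norm M)\<^sup>2"
    unfolding error by (rule integral_gaussian_vec_sq_dist[OF assms(4)])
  also have "(norm M)\<^sup>2 = (\<Sum>i\<in>UNIV. (\<nu> i)\<^sup>2)"
    using norm_power2_eq_sum_singular_values assms(5) by (simp add: M_def Q_def)
  finally show ?thesis
    by (simp add: Q_def)
qed

end
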